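(* For every integer $t\ge 2$, the dynamic geometric grid $G^{(t)}$ satisfies: (i) (geometric spacing) for every integer $d$ with $1\le d\le t/2$ there exists $g\in G^{(t)}$ with $d/2\le g\le d$; (ii) (logarithmic cardinality) $|G^{(t)}|<3\log t$; (iii) (recycling) $\{g-1: g\in G^{(t+1)}\setminus\{1\}\}\subseteq G^{(t)}$, equivalently $(t+1)-G^{(t+1)}\subseteq (t-G^{(t)})\cup\{t\}$.
   Context: $\log$ denotes the natural logarithm. For integers $a$ and $b\ge 1$, $a \bmod b = a-b\lfloor a/b\rfloor$. For a set $\mathcal X$ of reals and a real $x$, $x-\mathcal X=\{x-s:s\in\mathcal X\}$. For an integer $t\ge 2$ the dynamic geometric grid is $$G^{(t)}=\{1\}\cup\bigcup_{j=1}^{\lfloor \log_2\{(t-1)/3\}\rfloor+1}\{g^{(t)}_{L,j}\}\cup\bigcup_{j=1}^{\lfloor\log_2(t-1)\rfloor-1}\{g^{(t)}_{R,j}\},$$ where $g^{(t)}_{L,j}=2^j+\{(t-1)\bmod 2^{j-1}\}$ and $g^{(t)}_{R,j}=g^{(t)}_{L,j}+2^{j-1}$; a union whose upper index is smaller than $1$ is empty. *)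

theory Defs
  imports "HOL-Analysis.Analysis"
begin

definition gL :: "nat \<Rightarrow> nat \<Rightarrow> nat" where
  "gL t j = 2 ^ j + ((t - 1) mod 2 ^ (j - 1))"

definition gR :: "nat \<Rightarrow> nat \<Rightarrow> nat" where
  "gR t j = gL t j + 2 ^ (j - 1)"

definition dyn_grid :: "nat \<Rightarrow> nat set" where
  "dyn_grid t = {1}
     \<union> (\<Union>j\<in>{j::int. 1 \<le> j \<and> j \<le> \<lfloor>log 2 ((real t - 1) / 3)\<rfloor> + 1}. {gL t (nat j)})
     \<union> (\<Union>j\<in>{j::int. 1 \<le> j \<and> j \<le> \<lfloor>log 2 (real t - 1)\<rfloor> - 1}. {gR t (nat j)})"

end

(* Write r_k = (t - 1) mod 2^k. For t >= 2 the grid consists of 1 and, at each level k, the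
   points 2*2^k + r_k (present when 3*2^k <= t - 1) and 3*2^k + r_k (present when
   4*2^k <= t - 1), lying in [2*2^k, 3*2^k) and [3*2^k, 4*2^k) respectively.
   Spacing: if 2*2^k <= d < 4*2^k, either the left point of level k is at most d, or
   d < 3*2^k and the right point of level k - 1, which lies in [3*2^(k-1), 2^(k+1)), is in
   [d/2, d].
   Cardinality: there are about log2 (t/3) + 1 left and log2 t - 1 right points, and
   2 log2 t <= 3 ln t because ln 2 >= 2/3.
   Recycling: going from t to t + 1 increments every r_k modulo 2^k. Without wrap-around
   g - 1 is the same point of the grid for t; when r_k wraps to 0 (that is, 2^k divides t),
   g - 1 = c*2^k - 1 is the top of the preceding interval, i.e. the right point of level k - 1
   (or 1 when k = 0) or the left point of level k. *)
theory Submission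
  imports Defs
begin

lemma int_le_floor_log_iff:
  fixes b x :: real
  assumes "1 < b" "0 < x"
  shows "int k \<le> \<lfloor>log b x\<rfloor> \<longleftrightarrow> b ^ k \<le> x"
proof -
  have "int k \<le> \<lfloor>log b x\<rfloor> \<longleftrightarrow> real k \<le> log b x"
    by (simp add: le_floor_iff)
  also have "\<dots> \<longleftrightarrow> b powr real k \<le> x"
    using assms by (rule le_log_iff)
  also have "\<dots> \<longleftrightarrow> b ^ k \<le> x"
    using assms by (simp add: powr_realpow)
  finally show ?thesis .
qed

lemma UN_positive_int_singleton:
  "(\<Union>j\<in>{j::int. 1 \<le> j \<and> P j}. {f (nat j)}) = (\<lambda>k. f (Suc k)) ` {k. P (int (Suc k))}"
proof (intro equalityI subsetI)
  fix x assume "x \<in> (\<Union>j\<in>{j::int. 1 \<le> j \<and> P j}. {f (nat j)})"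
  then obtain j where "1 \<le> j" "P j" "x = f (nat j)" by blast
  then show "x \<in> (\<lambda>k. f (Suc k)) ` {k. P (int (Suc k))}"
    by (intro image_eqI[of _ _ "nat j - 1"]) auto
next
  fix x assume "x \<in> (\<lambda>k. f (Suc k)) ` {k. P (int (Suc k))}"
  then obtain k where "P (int (Suc k))" "x = f (Suc k)" by blast
  then show "x \<in> (\<Union>j\<in>{j::int. 1 \<le> j \<and> P j}. {f (nat j)})"
    by (intro UN_I[of "int (Suc k)"]) (auto simp del: of_nat_Suc)
qed

lemma card_image_int_interval_le: "card (f ` {j::int. 1 \<le> j \<and> j \<le> K}) \<le> nat K"
proof -
  have "{j::int. 1 \<le> j \<and> j \<le> K} = {1..K}" by auto
  then show ?thesis
    using card_image_le[of "{1..K}" f] by simp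
qed

lemma dyn_grid_eq:
  assumes "2 \<le> t"
  shows "dyn_grid t = {1}
    \<union> {2 * 2^k + (t - 1) mod 2^k | k. 3 * 2^k \<le> t - 1}
    \<union> {3 * 2^k + (t - 1) mod 2^k | k. 4 * 2^k \<le> t - 1}"
proof -
  have pos: "0 < real t - 1" using assms by simp
  have left: "int (Suc k) \<le> \<lfloor>log 2 ((real t - 1) / 3)\<rfloor> + 1 \<longleftrightarrow> 3 * 2^k \<le> t - 1" for k
  proof -
    have "int (Suc k) \<le> \<lfloor>log 2 ((real t - 1) / 3)\<rfloor> + 1 \<longleftrightarrow> (2::real) ^ k \<le> (real t - 1) / 3"
      using int_le_floor_log_iff[of 2 "(real t - 1) / 3" k] pos by simp
    also have "\<dots> \<longleftrightarrow> real (3 * 2^k) \<le> real (t - 1)"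
      using assms by (simp add: field_simps of_nat_diff)
    also have "\<dots> \<longleftrightarrow> 3 * 2^k \<le> t - 1"
      by (rule of_nat_le_iff)
    finally show ?thesis .
  qed
  have right: "int (Suc k) \<le> \<lfloor>log 2 (real t - 1)\<rfloor> - 1 \<longleftrightarrow> 4 * 2^k \<le> t - 1" for k
  proof -
    have "int (Suc k) \<le> \<lfloor>log 2 (real t - 1)\<rfloor> - 1 \<longleftrightarrow> int (k + 2) \<le> \<lfloor>log 2 (real t - 1)\<rfloor>"
      by linarith
    also have "\<dots> \<longleftrightarrow> (2::real) ^ (k + 2) \<le> real t - 1"
      using pos by (simp only: int_le_floor_log_iff)
    also have "\<dots> \<longleftrightarrow> real (4 * 2^k) \<le> real (t - 1)"
      using assms by (simp add: of_nat_diff)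
    also have "\<dots> \<longleftrightarrow> 4 * 2^k \<le> t - 1"
      by (rule of_nat_le_iff)
    finally show ?thesis .
  qed
  have "(\<Union>j\<in>{j::int. 1 \<le> j \<and> j \<le> \<lfloor>log 2 ((real t - 1) / 3)\<rfloor> + 1}. {gL t (nat j)})
      = {2 * 2^k + (t - 1) mod 2^k | k. 3 * 2^k \<le> t - 1}"
    unfolding UN_positive_int_singleton[where f = "gL t"] left by (auto simp: gL_def)
  moreover have "(\<Union>j\<in>{j::int. 1 \<le> j \<and> j \<le> \<lfloor>log 2 (real t - 1)\<rfloor> - 1}. {gR t (nat j)})
      = {3 * 2^k + (t - 1) mod 2^k | k. 4 * 2^k \<le> t - 1}"
    unfolding UN_positive_int_singleton[where f = "gR t"] right by (auto simp: gR_def gL_def)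
  ultimately show ?thesis
    unfolding dyn_grid_def by simp
qed

lemma dyn_grid_cases:
  assumes "2 \<le> t" "g \<in> dyn_grid t"
  obtains "g = 1"
  | k where "g = 2 * 2^k + (t - 1) mod 2^k" "3 * 2^k \<le> t - 1"
  | k where "g = 3 * 2^k + (t - 1) mod 2^k" "4 * 2^k \<le> t - 1"
  using assms by (auto simp: dyn_grid_eq)

lemma one_mem_dyn_grid: "2 \<le> t \<Longrightarrow> 1 \<in> dyn_grid t"
  by (simp add: dyn_grid_eq)

lemma left_mem_dyn_grid:
  "2 \<le> t \<Longrightarrow> 3 * 2^k \<le> t - 1 \<Longrightarrow> 2 * 2^k + (t - 1) mod 2^k \<in> dyn_grid t"
  by (auto simp: dyn_grid_eq)

lemma right_mem_dyn_grid:
  "2 \<le> t \<Longrightarrow> 4 * 2^k \<le> t - 1 \<Longrightarrow> 3 * 2^k + (t - 1) mod 2^k \<in> dyn_grid t"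
  by (auto simp: dyn_grid_eq)

lemma dyn_grid_pos: "2 \<le> t \<Longrightarrow> g \<in> dyn_grid t \<Longrightarrow> 0 < g"
  by (erule dyn_grid_cases) auto

lemma Suc_mod_if_not_dvd: "\<not> p dvd Suc s \<Longrightarrow> Suc s mod p = Suc (s mod p)"
  using mod_Suc[of s p] by (auto simp: dvd_eq_mod_eq_0 split: if_splits)

lemma mod_if_dvd_Suc: "p dvd Suc s \<Longrightarrow> s mod p = p - 1"
  using mod_Suc[of s p] by (auto simp: dvd_eq_mod_eq_0 split: if_splits)

lemma dyn_grid_recycle:
  assumes t: "2 \<le> t" and g: "g \<in> dyn_grid (t + 1)" "g \<noteq> 1"
  shows "g - 1 \<in> dyn_grid t"
proof -
  obtain s where s: "t = Suc s" using t by (cases t) auto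
  have "2 \<le> t + 1" using t by simp
  from this g(1) show ?thesis
  proof (cases rule: dyn_grid_cases)
    case 1
    with g(2) show ?thesis by simp
  next
    case (2 k)
    then have g_eq: "g = 2 * 2^k + t mod 2^k" and level: "3 * 2^k \<le> t" by simp_all
    show ?thesis
    proof (cases "2^k dvd t")
      case False
      then have "3 * 2^k \<noteq> t" by auto
      with False show ?thesis
        using left_mem_dyn_grid[OF t, of k] g_eq level s by (simp add: Suc_mod_if_not_dvd)
    next
      case True
      show ?thesis
      proof (cases k)
        case 0
        with g_eq one_mem_dyn_grid[OF t] show ?thesis by simp
      next
        case (Suc m)
        with True have "2^m dvd t" by (auto intro: dvd_mult_left)
        then have "(t - 1) mod 2^m = 2^m - 1" using s by (simp add: mod_if_dvd_Suc)
        with g_eq True Suc level show ?thesis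
          using right_mem_dyn_grid[OF t, of m] by simp
      qed
    qed
  next
    case (3 k)
    then have g_eq: "g = 3 * 2^k + t mod 2^k" and level: "4 * 2^k \<le> t" by simp_all
    show ?thesis
    proof (cases "2^k dvd t")
      case False
      then have "4 * 2^k \<noteq> t" by auto
      with False show ?thesis
        using right_mem_dyn_grid[OF t, of k] g_eq level s by (simp add: Suc_mod_if_not_dvd)
    next
      case True
      then have "(t - 1) mod 2^k = 2^k - 1" using s by (simp add: mod_if_dvd_Suc)
      with g_eq True level show ?thesis
        using left_mem_dyn_grid[OF t, of k] by simp
    qed
  qed
qed

lemma reflected_dyn_grid_recycle:
  assumes "2 \<le> t"
  shows "(\<lambda>g. int (t + 1) - int g) ` dyn_grid (t + 1) \<subseteq> (\<lambda>g. int t - int g) ` dyn_grid t \<union> {int t}"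
proof
  fix x assume "x \<in> (\<lambda>g. int (t + 1) - int g) ` dyn_grid (t + 1)"
  then obtain g where g: "g \<in> dyn_grid (t + 1)" "x = int (t + 1) - int g" by blast
  show "x \<in> (\<lambda>g. int t - int g) ` dyn_grid t \<union> {int t}"
  proof (cases "g = 1")
    case False
    have "0 < g" using dyn_grid_pos[OF _ g(1)] assms by simp
    moreover have "g - 1 \<in> dyn_grid t" using dyn_grid_recycle[OF assms g(1) False] .
    ultimately show ?thesis using g(2) by (intro UnI1 image_eqI[of _ _ "g - 1"]) auto
  qed (use g(2) in simp)
qed

lemma dyn_grid_spacing:
  assumes t: "2 \<le> t" and d: "1 \<le> d" "2 * d \<le> t"
  shows "\<exists>g\<in>dyn_grid t. d \<le> 2 * g \<and> g \<le> d"
proof (cases "d = 1")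
  case True
  then show ?thesis using one_mem_dyn_grid[OF t] by auto
next
  case False
  with d have "1 \<le> d div 2" by simp
  then obtain k where "2^k \<le> d div 2" "d div 2 < 2^(k + 1)"
    using ex_power_ivl1[of 2 "d div 2"] by auto
  then have dk: "2 * 2^k \<le> d" "d < 4 * 2^k" by auto
  define r where "r = (t - 1) mod 2^k"
  have "r < 2^k" by (simp add: r_def)
  show ?thesis
  proof (cases "2 * 2^k + r \<le> d")
    case True
    have "3 * 2^k \<le> t - 1" using dk d by linarith
    with True dk show ?thesis
      using left_mem_dyn_grid[OF t, of k] by (intro bexI[of _ "2 * 2^k + r"]) (auto simp: r_def)
  next
    case False
    obtain m where m: "k = Suc m"
      using False \<open>r < 2^k\<close> dk by (cases k) auto
    define g where "g = 3 * 2^m + (t - 1) mod 2^m"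
    have "4 * 2^m \<le> d" using dk(1) m by simp
    with d have "g \<in> dyn_grid t"
      using right_mem_dyn_grid[OF t, of m] by (simp add: g_def)
    moreover have "g < 4 * 2^m" using mod_less_divisor[of "2^m" "t - 1"] by (simp add: g_def)
    moreover have "d < 2 * (3 * 2^m)" using False \<open>r < 2^k\<close> m by simp
    moreover have "3 * 2^m \<le> g" by (simp add: g_def)
    ultimately show ?thesis
      using \<open>4 * 2^m \<le> d\<close> by (intro bexI[of _ g]) auto
  qed
qed

lemma two_log2_le_three_ln:
  assumes "1 \<le> x"
  shows "2 * log 2 x \<le> 3 * ln x"
proof -
  have "2 * ln x \<le> 3 * ln 2 * ln x"
    using ln2_ge_two_thirds assms by (intro mult_right_mono) auto
  then show ?thesis by (simp add: log_def divide_le_eq mult_ac)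
qed

lemma card_dyn_grid_le:
  "card (dyn_grid t) \<le> 1 + nat (\<lfloor>log 2 ((real t - 1) / 3)\<rfloor> + 1) + nat (\<lfloor>log 2 (real t - 1)\<rfloor> - 1)"
proof -
  define A where "A = (\<lambda>j. gL t (nat j)) ` {j::int. 1 \<le> j \<and> j \<le> \<lfloor>log 2 ((real t - 1) / 3)\<rfloor> + 1}"
  define B where "B = (\<lambda>j. gR t (nat j)) ` {j::int. 1 \<le> j \<and> j \<le> \<lfloor>log 2 (real t - 1)\<rfloor> - 1}"
  have "dyn_grid t = {1} \<union> A \<union> B"
    unfolding dyn_grid_def A_def B_def UNION_singleton_eq_range ..
  then have "card (dyn_grid t) \<le> 1 + card A + card B"
    using card_Un_le[of "{1} \<union> A" B] card_Un_le[of "{1}" A] by simp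
  moreover have "card A \<le> nat (\<lfloor>log 2 ((real t - 1) / 3)\<rfloor> + 1)"
    unfolding A_def by (rule card_image_int_interval_le)
  moreover have "card B \<le> nat (\<lfloor>log 2 (real t - 1)\<rfloor> - 1)"
    unfolding B_def by (rule card_image_int_interval_le)
  ultimately show ?thesis by linarith
qed

lemma card_dyn_grid_less:
  assumes t: "2 \<le> t"
  shows "real (card (dyn_grid t)) < 3 * ln (real t)"
proof (cases "t \<le> 3")
  case True
  have "\<not> c * 2^k \<le> t - 1" if "3 \<le> c" for c k :: nat
    using True that mult_le_mono[OF that one_le_power[of 2 k]] by linarith
  then have "dyn_grid t = {1}" using dyn_grid_eq[OF t] by auto
  moreover have "2 \<le> 3 * ln (2::real)" using ln2_ge_two_thirds by simp
  moreover have "ln 2 \<le> ln (real t)" using t by simp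
  ultimately show ?thesis by simp
next
  case False
  define n where "n = real t - 1"
  have n: "3 \<le> n" using False by (simp add: n_def)
  have "log 2 3 > (1::real)" by simp
  moreover have "log 2 3 \<le> log 2 n" using n by simp
  moreover have "real (nat (\<lfloor>log 2 (n / 3)\<rfloor> + 1)) \<le> log 2 n - log 2 3 + 1"
    using n of_int_floor_le[of "log 2 (n / 3)"] by (simp add: log_divide)
  moreover have "real (nat (\<lfloor>log 2 n\<rfloor> - 1)) \<le> log 2 n - 1"
    using of_int_floor_le[of "log 2 n"] \<open>log 2 3 \<le> log 2 n\<close> \<open>log 2 3 > 1\<close> by linarith
  ultimately have "real (card (dyn_grid t)) < 2 * log 2 n"
    using card_dyn_grid_le[of t] unfolding n_def[symmetric] by linarith
  also have "\<dots> \<le> 3 * ln n" using n by (intro two_log2_le_three_ln) simp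
  also have "\<dots> < 3 * ln (real t)" using n by (simp add: n_def)
  finally show ?thesis .
qed

theorem lemma1:
  fixes t :: nat
  assumes "t \<ge> 2"
  shows "(\<forall>d::nat. 1 \<le> d \<and> real d \<le> real t / 2 \<longrightarrow>
            (\<exists>g\<in>dyn_grid t. real d / 2 \<le> real g \<and> g \<le> d))
       \<and> real (card (dyn_grid t)) < 3 * ln (real t)
       \<and> (\<lambda>g. g - 1) ` (dyn_grid (t + 1) - {1}) \<subseteq> dyn_grid t
       \<and> (\<lambda>g. int (t + 1) - int g) ` dyn_grid (t + 1)
            \<subseteq> ((\<lambda>g. int t - int g) ` dyn_grid t) \<union> {int t}"
proof (intro conjI allI impI)
  fix d :: nat
  assume "1 \<le> d \<and> real d \<le> real t / 2"
  then obtain g where "g \<in> dyn_grid t" "d \<le> 2 * g" "g \<le> d"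
    using dyn_grid_spacing[OF assms] by fastforce
  then show "\<exists>g\<in>dyn_grid t. real d / 2 \<le> real g \<and> g \<le> d" by force
next
  show "real (card (dyn_grid t)) < 3 * ln (real t)"
    using assms by (rule card_dyn_grid_less)
  show "(\<lambda>g. g - 1) ` (dyn_grid (t + 1) - {1}) \<subseteq> dyn_grid t"
    using dyn_grid_recycle[OF assms] by blast
  show "(\<lambda>g. int (t + 1) - int g) ` dyn_grid (t + 1) \<subseteq> ((\<lambda>g. int t - int g) ` dyn_grid t) \<union> {int t}"
    using assms by (rule reflected_dyn_grid_recycle)
qed

end
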